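(* Let $K\ge 2$ be an integer and $\alpha\in\mathbb{R}$. Let $C_{\alpha,K}$ denote the largest $C\ge 0$ such that for every $p,q\in\operatorname{relint}(\Delta^K)$, \[ D_\alpha(p\Vert q)\ \ge\ \frac{C}{2}\,\|p-q\|_1^2 . \] Then \[ C_{\alpha,K}=\begin{cases} 2^{1-\alpha} & \text{if } \alpha\in(-\infty,1],\\ K^{1-\alpha} & \text{if } \alpha\in(1,2] \text{ and } K \text{ is even},\\ K^{1-\alpha}\cdot \sigma_{\alpha,K} & \text{if } \alpha\in(1,2] \text{ and } K \text{ is odd},\\ 2^{1-\max\{\alpha,3\}} & \text{if } \alpha\in(2,+\infty) \text{ and } K=2,\\ 0 & \text{if } \alpha\in(2,+\infty) \text{ and } K\ge 3, \end{cases} \] where \[ \sigma_{\alpha,K}:=\left(\frac{\left(1-\frac1K\right)^{\frac{1-\alpha}{3-\alpha}}+\left(1+\frac1K\right)^{\frac{1-\alpha}{3-\alpha}}}{2}\right)^{3-\alpha}. \]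
   Context: $\Delta^K=\{p\in[0,1]^K:\sum_{k=1}^K p_k=1\}$ is the probability simplex and $\operatorname{relint}(\Delta^K)=\Delta^K\cap(0,1)^K$. For $\alpha\in\mathbb{R}$ and $p\in(0,+\infty)^K$, the $\alpha$-Tsallis entropy is $S_\alpha(p)=\frac{\sum_{k=1}^K p_k^\alpha}{\alpha(1-\alpha)}$ if $\alpha\notin\{0,1\}$, $S_0(p)=\sum_{k=1}^K\ln p_k$, and $S_1(p)=-\sum_{k=1}^K p_k\ln p_k$. For $p,q\in(0,+\infty)^K$, $D_\alpha(p\Vert q)$ is the Bregman divergence of $-S_\alpha$: $D_\alpha(p\Vert q)=-S_\alpha(p)+S_\alpha(q)+\langle\nabla S_\alpha(q),p-q\rangle$. Explicitly, $D_\alpha(p\Vert q)=\frac1\alpha\sum_k\frac{p_k^\alpha+(\alpha-1)q_k^\alpha-\alpha p_kq_k^{\alpha-1}}{\alpha-1}$ for $\alpha\notin\{0,1\}$, $D_0(p\Vert q)=\sum_k\big(\frac{p_k}{q_k}-\ln\frac{p_k}{q_k}-1\big)$, and $D_1(p\Vert q)=\sum_k\big(p_k\ln\frac{p_k}{q_k}-p_k+q_k\big)$. $\|x\|_1=\sum_k|x_k|$. *)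

theory Defs
  imports "HOL-Analysis.Analysis"
begin

(* Distributions on K outcomes are represented as functions nat => real,
   only the coordinates 0..K-1 matter. *)

definition relint_simplex :: "nat \<Rightarrow> (nat \<Rightarrow> real) set" where
  "relint_simplex K = {p. (\<forall>k<K. 0 < p k \<and> p k < 1) \<and> (\<Sum>k<K. p k) = 1}"

(* Bregman divergence of -S_alpha, in its explicit form *)
definition tsallis_div :: "real \<Rightarrow> nat \<Rightarrow> (nat \<Rightarrow> real) \<Rightarrow> (nat \<Rightarrow> real) \<Rightarrow> real" where
  "tsallis_div \<alpha> K p q =
    (if \<alpha> = 0 then (\<Sum>k<K. p k / q k - ln (p k / q k) - 1)
     else if \<alpha> = 1 then (\<Sum>k<K. p k * ln (p k / q k) - p k + q k)
     else (1 / \<alpha>) * (\<Sum>k<K. (p k powr \<alpha> + (\<alpha> - 1) * q k powr \<alpha>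
                                - \<alpha> * p k * q k powr (\<alpha> - 1)) / (\<alpha> - 1)))"

definition l1_dist :: "nat \<Rightarrow> (nat \<Rightarrow> real) \<Rightarrow> (nat \<Rightarrow> real) \<Rightarrow> real" where
  "l1_dist K p q = (\<Sum>k<K. \<bar>p k - q k\<bar>)"

definition pinsker_consts :: "real \<Rightarrow> nat \<Rightarrow> real set" where
  "pinsker_consts \<alpha> K = {C. 0 \<le> C \<and> (\<forall>p\<in>relint_simplex K. \<forall>q\<in>relint_simplex K.
       tsallis_div \<alpha> K p q \<ge> C / 2 * (l1_dist K p q)\<^sup>2)}"

definition sigma_const :: "real \<Rightarrow> nat \<Rightarrow> real" where
  "sigma_const \<alpha> K =
     (((1 - 1 / real K) powr ((1 - \<alpha>) / (3 - \<alpha>)) + (1 + 1 / real K) powr ((1 - \<alpha>) / (3 - \<alpha>))) / 2)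
       powr (3 - \<alpha>)"

definition C_formula :: "real \<Rightarrow> nat \<Rightarrow> real" where
  "C_formula \<alpha> K =
    (if \<alpha> \<le> 1 then 2 powr (1 - \<alpha>)
     else if \<alpha> \<le> 2 then (if even K then real K powr (1 - \<alpha>)
                          else real K powr (1 - \<alpha>) * sigma_const \<alpha> K)
     else if K = 2 then 2 powr (1 - max \<alpha> 3)
     else 0)"

end

theory Submission
  imports Defs
begin

(* By Taylor's theorem along the segment from q to p,
     D_alpha(p || q) = 1/2 * sum_k (p_k - q_k)^2 * z_k^(alpha - 2)
   for some z in the open simplex, so the optimal constant is the infimum of the Hessian form
   sum_k d_k^2 z_k^(alpha - 2) / ||d||_1^2 over interior z and zero-sum directions d.

   Lower bound: the positive and negative parts of d live on disjoint index sets A, B and both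
   have l1-mass ||d||_1 / 2.  Cauchy-Schwarz on each part reduces the claim to
     4 C <= 1 / sum_A z_k^(2 - alpha) + 1 / sum_B z_k^(2 - alpha).
   Power-mean inequalities bound the block sums by the block masses M_A + M_B <= 1, and the
   resulting weighted sum c_A M_A^(alpha - 2) + c_B M_B^(alpha - 2) is minimised by a tangent-line
   argument; for 1 < alpha <= 2 the weights depend on the block sizes, and balanced sizes
   floor(K/2), ceiling(K/2) are worst.  For alpha > 2 and K = 2 both blocks are single points.

   Upper bound: letting p tend to q along q + t d shows that every admissible C is below the
   Hessian form at every interior point.  Evaluating it at the extremal configurations (two
   coordinates carrying almost all the mass, two uniform blocks with the optimal masses, or
   coordinates escaping to the boundary) gives the matching values. *)

(* -S_alpha(p) = sum_k tsallis_phi alpha (p_k), so tsallis_div is the Bregman divergence of this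
   separable convex function, whose second derivative is x^(alpha - 2). *)
definition tsallis_phi :: "real \<Rightarrow> real \<Rightarrow> real" where
  "tsallis_phi \<alpha> x =
    (if \<alpha> = 0 then - ln x else if \<alpha> = 1 then x * ln x else x powr \<alpha> / (\<alpha> * (\<alpha> - 1)))"

definition tsallis_phi' :: "real \<Rightarrow> real \<Rightarrow> real" where
  "tsallis_phi' \<alpha> x =
    (if \<alpha> = 0 then - 1 / x else if \<alpha> = 1 then ln x + 1 else x powr (\<alpha> - 1) / (\<alpha> - 1))"

lemma has_real_derivative_tsallis_phi:
  assumes "0 < x"
  shows "(tsallis_phi \<alpha> has_real_derivative tsallis_phi' \<alpha> x) (at x)"
proof -
  consider "\<alpha> = 0" | "\<alpha> = 1" | "\<alpha> \<noteq> 0" "\<alpha> \<noteq> 1" by blast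
  then show ?thesis
  proof cases
    case 1
    have "((\<lambda>x. - ln x) has_real_derivative - (1 / x)) (at x)"
      using assms by (auto intro!: derivative_eq_intros)
    then show ?thesis
      using 1 by (simp add: tsallis_phi_def[abs_def] tsallis_phi'_def)
  next
    case 2
    have "((\<lambda>x. x * ln x) has_real_derivative ln x + 1) (at x)"
      using assms by (auto intro!: derivative_eq_intros)
    then show ?thesis
      using 2 by (simp add: tsallis_phi_def[abs_def] tsallis_phi'_def)
  next
    case 3
    have "((\<lambda>x. x powr \<alpha> / (\<alpha> * (\<alpha> - 1))) has_real_derivative
           \<alpha> * x powr (\<alpha> - 1) / (\<alpha> * (\<alpha> - 1))) (at x)"
      using assms 3 by (auto intro!: derivative_eq_intros)
    moreover have "\<alpha> * x powr (\<alpha> - 1) / (\<alpha> * (\<alpha> - 1)) = x powr (\<alpha> - 1) / (\<alpha> - 1)"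
      using 3 by simp
    ultimately show ?thesis
      using 3 by (simp add: tsallis_phi_def[abs_def] tsallis_phi'_def)
  qed
qed

lemma has_real_derivative_tsallis_phi':
  assumes "0 < x"
  shows "(tsallis_phi' \<alpha> has_real_derivative x powr (\<alpha> - 2)) (at x)"
proof -
  consider "\<alpha> = 0" | "\<alpha> = 1" | "\<alpha> \<noteq> 0" "\<alpha> \<noteq> 1" by blast
  then show ?thesis
  proof cases
    case 1
    have "((\<lambda>x. - 1 / x) has_real_derivative 1 / x\<^sup>2) (at x)"
      using assms by (auto intro!: derivative_eq_intros simp: power2_eq_square field_simps)
    moreover have "1 / x\<^sup>2 = x powr (0 - 2)"
      using assms by (simp add: powr_minus powr_realpow divide_inverse)
    ultimately show ?thesis
      using 1 by (simp add: tsallis_phi'_def[abs_def])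
  next
    case 2
    have "((\<lambda>x. ln x + 1) has_real_derivative 1 / x) (at x)"
      using assms by (auto intro!: derivative_eq_intros)
    moreover have "1 / x = x powr (1 - 2)"
      using assms by (simp add: powr_minus divide_inverse)
    ultimately show ?thesis
      using 2 by (simp add: tsallis_phi'_def[abs_def])
  next
    case 3
    have "((\<lambda>x. x powr (\<alpha> - 1) / (\<alpha> - 1)) has_real_derivative
           (\<alpha> - 1) * x powr (\<alpha> - 1 - 1) / (\<alpha> - 1)) (at x)"
      using assms by (auto intro!: derivative_eq_intros)
    moreover have "(\<alpha> - 1) * x powr (\<alpha> - 1 - 1) / (\<alpha> - 1) = x powr (\<alpha> - 2)"
      using 3 by simp
    ultimately show ?thesis
      using 3 by (simp add: tsallis_phi'_def[abs_def])
  qed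
qed

lemma tsallis_div_eq_bregman:
  assumes "\<And>k. k < K \<Longrightarrow> 0 < p k" "\<And>k. k < K \<Longrightarrow> 0 < q k"
  shows "tsallis_div \<alpha> K p q =
    (\<Sum>k<K. tsallis_phi \<alpha> (p k) - tsallis_phi \<alpha> (q k) - tsallis_phi' \<alpha> (q k) * (p k - q k))"
proof -
  consider "\<alpha> = 0" | "\<alpha> = 1" | "\<alpha> \<noteq> 0" "\<alpha> \<noteq> 1" by blast
  then show ?thesis
  proof cases
    case 1
    have "x / y - ln (x / y) - 1 = - ln x - - ln y - - 1 / y * (x - y)" if "0 < x" "0 < y" for x y :: real
      using that by (simp add: ln_divide_pos diff_divide_distrib)
    then show ?thesis
      using 1 assms by (simp add: tsallis_div_def tsallis_phi_def tsallis_phi'_def)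
  next
    case 2
    have "x * ln (x / y) - x + y = x * ln x - y * ln y - (ln y + 1) * (x - y)" if "0 < x" "0 < y" for x y :: real
      using that by (simp add: ln_divide_pos algebra_simps)
    then show ?thesis
      using 2 assms by (simp add: tsallis_div_def tsallis_phi_def tsallis_phi'_def)
  next
    case 3
    have "(1 / \<alpha>) * ((P + (\<alpha> - 1) * (Y * y) - \<alpha> * x * Y) / (\<alpha> - 1))
        = P / (\<alpha> * (\<alpha> - 1)) - Y * y / (\<alpha> * (\<alpha> - 1)) - Y / (\<alpha> - 1) * (x - y)" for P Y x y :: real
    proof -
      have E: "P + (\<alpha> - 1) * (Y * y) - \<alpha> * x * Y = P - Y * y - \<alpha> * Y * (x - y)"
        by (simp add: algebra_simps)
      have "(1 / \<alpha>) * ((P + (\<alpha> - 1) * (Y * y) - \<alpha> * x * Y) / (\<alpha> - 1))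
          = (P - Y * y - \<alpha> * Y * (x - y)) / (\<alpha> * (\<alpha> - 1))"
        unfolding E by simp
      also have "\<dots> = P / (\<alpha> * (\<alpha> - 1)) - Y * y / (\<alpha> * (\<alpha> - 1))
                     - \<alpha> * Y * (x - y) / (\<alpha> * (\<alpha> - 1))"
        by (simp only: diff_divide_distrib)
      also have "\<alpha> * Y * (x - y) / (\<alpha> * (\<alpha> - 1)) = Y / (\<alpha> - 1) * (x - y)"
        using 3 by simp
      finally show ?thesis .
    qed
    moreover have "y powr \<alpha> = y powr (\<alpha> - 1) * y" if "0 < y" for y :: real
      using that by (simp add: powr_diff)
    ultimately show ?thesis
      using 3 assms(2)
      by (simp add: tsallis_div_def tsallis_phi_def tsallis_phi'_def sum_distrib_left)
  qed
qed

lemma segment_pos: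
  fixes x y t :: real
  assumes "0 < x" "0 < y" "0 \<le> t" "t \<le> 1"
  shows "0 < y + t * (x - y)"
proof -
  have "0 < (1 - t) * y + t * x"
    using assms by (cases "t = 0") (auto intro: add_nonneg_pos)
  then show ?thesis
    by (simp add: algebra_simps)
qed

lemma has_real_derivative_sum_along_segment:
  fixes F F' w :: "real \<Rightarrow> real"
  assumes F: "\<And>x. 0 < x \<Longrightarrow> (F has_real_derivative F' x) (at x)"
    and pos: "\<And>k. k < K \<Longrightarrow> 0 < p k" "\<And>k. k < K \<Longrightarrow> 0 < q k" and t: "0 \<le> t" "t \<le> 1"
  shows "((\<lambda>t. \<Sum>k<K. F (q k + t * (p k - q k)) * w (p k - q k)) has_real_derivative
           (\<Sum>k<K. F' (q k + t * (p k - q k)) * (p k - q k) * w (p k - q k))) (at t)"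
proof -
  have "((\<lambda>t. q k + t * (p k - q k)) has_real_derivative p k - q k) (at t)" for k
    by (auto intro!: derivative_eq_intros)
  then show ?thesis
    using pos t by (intro DERIV_sum DERIV_cmult_right DERIV_chain'[of _ _ _ _ F] F segment_pos) auto
qed

(* One Taylor expansion of the whole sum along the segment from q to p, rather than one per
   coordinate: the common parameter xi keeps the intermediate point q + xi (p - q) on the simplex. *)
lemma bregman_sum_taylor:
  fixes f f' f'' :: "real \<Rightarrow> real"
  assumes f: "\<And>x. 0 < x \<Longrightarrow> (f has_real_derivative f' x) (at x)"
    and f': "\<And>x. 0 < x \<Longrightarrow> (f' has_real_derivative f'' x) (at x)"
    and pos: "\<And>k. k < K \<Longrightarrow> 0 < p k" "\<And>k. k < K \<Longrightarrow> 0 < q k"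
  obtains \<xi> where "0 < \<xi>" "\<xi> < 1"
    "(\<Sum>k<K. f (p k) - f (q k) - f' (q k) * (p k - q k))
       = (\<Sum>k<K. (p k - q k)\<^sup>2 * f'' (q k + \<xi> * (p k - q k))) / 2"
proof -
  define G where "G m = (if m = 0 then f else if m = 1 then f' else f'')" for m :: nat
  define g where "g m t = (\<Sum>k<K. G m (q k + t * (p k - q k)) * (p k - q k) ^ m)" for m t
  have "(g m has_real_derivative g (Suc m) t) (at t)" if "m < 2" "0 \<le> t" "t \<le> 1" for m t
  proof -
    have "\<And>x. 0 < x \<Longrightarrow> (G m has_real_derivative G (Suc m) x) (at x)"
      using \<open>m < 2\<close> f f' by (auto simp: G_def less_2_cases_iff)
    from has_real_derivative_sum_along_segment[where w = "\<lambda>d. d ^ m" and K = K and p = p and q = q,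
        OF this pos that(2,3)]
    show ?thesis
      by (simp add: g_def[abs_def] mult_ac)
  qed
  then have "\<forall>m t. m < 2 \<and> 0 \<le> t \<and> t \<le> 1 \<longrightarrow> (g m has_real_derivative g (Suc m) t) (at t)"
    by blast
  then obtain \<xi> where "0 < \<xi>" "\<xi> < 1"
    and "g 0 1 = (\<Sum>m<2. g m 0 / fact m * 1 ^ m) + g 2 \<xi> / fact 2 * 1 ^ 2"
    using Maclaurin[of 1 2 g "g 0", OF _ _ refl] by auto
  moreover have "(\<Sum>m<2. g m 0 / fact m * 1 ^ m) = (\<Sum>k<K. f (q k)) + (\<Sum>k<K. f' (q k) * (p k - q k))"
    by (simp add: g_def G_def eval_nat_numeral)
  ultimately have "(\<Sum>k<K. f (p k)) - (\<Sum>k<K. f (q k)) - (\<Sum>k<K. f' (q k) * (p k - q k))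
      = (\<Sum>k<K. (p k - q k)\<^sup>2 * f'' (q k + \<xi> * (p k - q k))) / 2"
    by (simp add: g_def G_def mult_ac)
  then show ?thesis
    using that \<open>0 < \<xi>\<close> \<open>\<xi> < 1\<close> by (simp add: sum_subtractf)
qed

lemma tsallis_div_taylor:
  assumes "\<And>k. k < K \<Longrightarrow> 0 < p k" "\<And>k. k < K \<Longrightarrow> 0 < q k"
  obtains \<xi> where "0 < \<xi>" "\<xi> < 1"
    "tsallis_div \<alpha> K p q = (\<Sum>k<K. (p k - q k)\<^sup>2 * (q k + \<xi> * (p k - q k)) powr (\<alpha> - 2)) / 2"
proof -
  obtain \<xi> where "0 < \<xi>" "\<xi> < 1"
    "(\<Sum>k<K. tsallis_phi \<alpha> (p k) - tsallis_phi \<alpha> (q k) - tsallis_phi' \<alpha> (q k) * (p k - q k))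
       = (\<Sum>k<K. (p k - q k)\<^sup>2 * (q k + \<xi> * (p k - q k)) powr (\<alpha> - 2)) / 2"
    by (rule bregman_sum_taylor[OF has_real_derivative_tsallis_phi has_real_derivative_tsallis_phi' assms])
  then show ?thesis
    using that tsallis_div_eq_bregman[OF assms] by simp
qed

lemma powr_above_tangent:
  fixes x y p :: real
  assumes "0 < x" "0 < y" "p \<le> 0 \<or> 1 \<le> p"
  shows "y powr p + p * y powr (p - 1) * (x - y) \<le> x powr p"
proof -
  have "convex_on {0<..} (\<lambda>x. x powr p)"
    by (rule f''_ge0_imp_convex[where f' = "\<lambda>x. p * x powr (p - 1)"
          and f'' = "\<lambda>x. p * ((p - 1) * x powr (p - 1 - 1))"])
       (use assms(3) in \<open>auto intro!: derivative_eq_intros mult_nonneg_nonneg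
                          simp: zero_le_mult_iff mult_le_0_iff\<close>)
  then have "p * y powr (p - 1) * (x - y) \<le> x powr p - y powr p"
    by (rule convex_on_imp_above_tangent)
       (use assms in \<open>auto intro!: derivative_eq_intros simp: interior_open\<close>)
  then show ?thesis by simp
qed

lemma sum_powr_le_powr_sum:
  fixes z :: "'a \<Rightarrow> real"
  assumes "finite A" "\<And>k. k \<in> A \<Longrightarrow> 0 < z k" "1 \<le> r"
  shows "(\<Sum>k\<in>A. z k powr r) \<le> (\<Sum>k\<in>A. z k) powr r"
proof -
  define M where "M = (\<Sum>k\<in>A. z k)"
  have "z k powr r \<le> z k * M powr (r - 1)" if "k \<in> A" for k
  proof -
    have "z k \<le> M"
      unfolding M_def using assms that by (intro member_le_sum) (auto intro: less_imp_le)
    then have "z k * z k powr (r - 1) \<le> z k * M powr (r - 1)"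
      using assms(2)[OF that] \<open>1 \<le> r\<close> by (intro mult_left_mono powr_mono2) auto
    then show ?thesis
      using assms(2)[OF that] by (simp add: powr_diff)
  qed
  then have "(\<Sum>k\<in>A. z k powr r) \<le> M * M powr (r - 1)"
    unfolding M_def by (simp add: sum_mono sum_distrib_right)
  also have "M * M powr (r - 1) = M powr r"
  proof -
    have "0 \<le> M"
      unfolding M_def using assms by (auto intro: sum_nonneg less_imp_le)
    then show ?thesis
      by (cases "M = 0") (simp_all add: powr_diff)
  qed
  finally show ?thesis unfolding M_def .
qed

lemma sum_powr_le_card_powr_sum:
  fixes z :: "'a \<Rightarrow> real"
  assumes "finite A" "A \<noteq> {}" "\<And>k. k \<in> A \<Longrightarrow> 0 < z k" "0 \<le> r" "r \<le> 1"
  shows "(\<Sum>k\<in>A. z k powr r) \<le> real (card A) powr (1 - r) * (\<Sum>k\<in>A. z k) powr r"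
proof -
  define n where "n = real (card A)"
  have n: "0 < n" unfolding n_def using assms by (simp add: card_gt_0_iff)
  have concave: "concave_on {0<..} (\<lambda>x. x powr r)"
    by (rule f''_le0_imp_concave[where f' = "\<lambda>x. r * x powr (r - 1)"
          and f'' = "\<lambda>x. r * ((r - 1) * x powr (r - 1 - 1))"])
       (use assms in \<open>auto intro!: derivative_eq_intros simp: mult_le_0_iff\<close>)
  have "(\<Sum>k\<in>A. (1 / n) * z k powr r) \<le> (\<Sum>k\<in>A. (1 / n) *\<^sub>R z k) powr r"
    using concave_on_sum[OF assms(1,2) concave, of "\<lambda>_. 1 / n" z] assms n by (simp add: n_def)
  then have "(\<Sum>k\<in>A. z k powr r) / n \<le> ((\<Sum>k\<in>A. z k) / n) powr r"
    by (simp add: sum_distrib_left[symmetric] sum_divide_distrib[symmetric])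
  also have "\<dots> = n powr (- r) * (\<Sum>k\<in>A. z k) powr r"
  proof -
    have "0 \<le> (\<Sum>k\<in>A. z k)"
      using assms by (auto intro: sum_nonneg less_imp_le)
    then show ?thesis
      using n by (simp add: powr_divide powr_minus field_simps)
  qed
  finally have "(\<Sum>k\<in>A. z k powr r) \<le> n * (n powr (- r) * (\<Sum>k\<in>A. z k) powr r)"
    using n by (simp add: divide_le_eq ac_simps)
  also have "n * (n powr (- r) * (\<Sum>k\<in>A. z k) powr r) = n powr (1 - r) * (\<Sum>k\<in>A. z k) powr r"
    using n by (simp add: powr_diff powr_minus field_simps)
  finally show ?thesis
    unfolding n_def .
qed

(* At the share U = c^(1/(1+r)) / W the derivative factor c * U^(-r-1) no longer depends on c. *)
lemma optimal_share_stationarity: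
  fixes c W r :: real
  assumes "0 < c" "0 < W" "0 \<le> r"
  shows "c * (c powr (1 / (1 + r)) / W) powr (- r - 1) = W powr (1 + r)"
proof -
  have "1 / (1 + r) * (- r - 1) = - 1"
    using assms by (simp add: field_simps)
  then have "(c powr (1 / (1 + r))) powr (- r - 1) = c powr (- 1)"
    by (simp only: powr_powr)
  moreover have "W powr (- r - 1) = inverse (W powr (1 + r))"
  proof -
    have "- r - 1 = - (1 + r)" by simp
    then show ?thesis by (simp only: powr_minus)
  qed
  moreover have "(c powr (1 / (1 + r)) / W) powr (- r - 1)
      = (c powr (1 / (1 + r))) powr (- r - 1) / W powr (- r - 1)"
    by (rule powr_divide)
  ultimately show ?thesis
    using assms by (simp add: powr_minus divide_inverse)
qed

(* The minimum over M + N <= 1 is attained at the shares U, V below; the tangent lines of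
   x^(-r) at U and V bound the sum from below by its value there. *)
lemma weighted_inverse_powr_sum_ge:
  fixes c1 c2 M N r :: real
  assumes c: "0 < c1" "0 < c2" and MN: "0 < M" "0 < N" "M + N \<le> 1" and r: "0 \<le> r"
  shows "(c1 powr (1 / (1 + r)) + c2 powr (1 / (1 + r))) powr (1 + r)
           \<le> c1 * M powr (- r) + c2 * N powr (- r)"
proof -
  define W where "W = c1 powr (1 / (1 + r)) + c2 powr (1 / (1 + r))"
  define U where "U = c1 powr (1 / (1 + r)) / W"
  define V where "V = c2 powr (1 / (1 + r)) / W"
  have W: "0 < W" unfolding W_def using c by (simp add: add_pos_pos)
  have UV: "0 < U" "0 < V" "U + V = 1"
    using c W by (simp_all add: U_def V_def W_def add_divide_distrib[symmetric])
  have tangent: "c * M powr (- r) \<ge> (1 + r) * W powr (1 + r) * U - r * W powr (1 + r) * M"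
    if "0 < c" "0 < U" "c * U powr (- r - 1) = W powr (1 + r)" "0 < M" for c U M
  proof -
    have "U powr (- r) + - r * U powr (- r - 1) * (M - U) \<le> M powr (- r)"
      using powr_above_tangent[of M U "- r"] that r by simp
    then have "c * (U powr (- r) - r * U powr (- r - 1) * (M - U)) \<le> c * M powr (- r)"
      using that by (simp add: mult_left_mono)
    moreover have "U powr (- r) = U powr (- r - 1) * U"
      using that by (simp add: powr_diff)
    then have "c * (U powr (- r) - r * U powr (- r - 1) * (M - U))
        = (c * U powr (- r - 1)) * ((1 + r) * U - r * M)"
      by (simp add: algebra_simps)
    ultimately show ?thesis
      using that by (simp add: algebra_simps)
  qed
  have "W powr (1 + r) = (1 + r) * W powr (1 + r) * (U + V) - r * W powr (1 + r) * 1"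
    using UV by (simp add: algebra_simps)
  also have "\<dots> \<le> (1 + r) * W powr (1 + r) * (U + V) - r * W powr (1 + r) * (M + N)"
    using MN r by (intro diff_left_mono mult_left_mono) auto
  also have "\<dots> \<le> c1 * M powr (- r) + c2 * N powr (- r)"
    using tangent[OF c(1) UV(1) _ MN(1)] tangent[OF c(2) UV(2) _ MN(2)]
      optimal_share_stationarity[OF c(1) W r] optimal_share_stationarity[OF c(2) W r]
    by (simp add: U_def V_def W_def algebra_simps)
  finally show ?thesis
    unfolding W_def .
qed

lemma weighted_inverse_powr_sum_at_optimum:
  fixes c1 c2 r :: real
  assumes c: "0 < c1" "0 < c2" and r: "0 \<le> r"
  defines "W \<equiv> c1 powr (1 / (1 + r)) + c2 powr (1 / (1 + r))"
  shows "c1 * (c1 powr (1 / (1 + r)) / W) powr (- r) + c2 * (c2 powr (1 / (1 + r)) / W) powr (- r)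
           = W powr (1 + r)"
proof -
  have W: "0 < W" unfolding W_def using c by (simp add: add_pos_pos)
  have "c * (c powr (1 / (1 + r)) / W) powr (- r) = W powr (1 + r) * (c powr (1 / (1 + r)) / W)"
    if "0 < c" for c
  proof -
    have "(c powr (1 / (1 + r)) / W) powr (- r)
        = (c powr (1 / (1 + r)) / W) powr (- r - 1) * (c powr (1 / (1 + r)) / W)"
      using that W by (simp add: powr_diff)
    then show ?thesis
      using optimal_share_stationarity[OF that W r] by simp
  qed
  then show ?thesis
    using c W by (simp add: W_def add_divide_distrib[symmetric] distrib_left[symmetric])
qed

lemma powr_add_powr_compl_antimono:
  fixes e x y K :: real
  assumes e: "e \<le> 0" and xy: "0 < x" "x \<le> y" and yK: "2 * y \<le> K"
  shows "y powr e + (K - y) powr e \<le> x powr e + (K - x) powr e"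
proof (rule DERIV_nonpos_imp_nonincreasing[OF \<open>x \<le> y\<close>, where f = "\<lambda>t. t powr e + (K - t) powr e"])
  fix t assume t: "x \<le> t" "t \<le> y"
  then have t_pos: "0 < t" "t \<le> K - t"
    using xy yK by auto
  have "((\<lambda>t. t powr e + (K - t) powr e) has_real_derivative
         e * t powr (e - 1) - e * (K - t) powr (e - 1)) (at t)"
    using t_pos by (auto intro!: derivative_eq_intros)
  moreover have "e * t powr (e - 1) \<le> e * (K - t) powr (e - 1)"
    using e t_pos by (intro mult_left_mono_neg powr_mono2') auto
  ultimately show "\<exists>D. ((\<lambda>t. t powr e + (K - t) powr e) has_real_derivative D) (at t) \<and> D \<le> 0"
    by auto
qed

lemma powr_add_powr_ge_balanced_split:
  fixes e :: real and a b K :: nat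
  assumes e: "e \<le> 0" and ab: "1 \<le> a" "1 \<le> b" "a + b \<le> K"
  shows "real (K div 2) powr e + real (K - K div 2) powr e \<le> real a powr e + real b powr e"
proof -
  have balanced_le: "real (K div 2) powr e + real (K - K div 2) powr e \<le> real m powr e + real n powr e"
    if "1 \<le> m" "m \<le> n" "m + n \<le> K" for m n :: nat
  proof -
    have "real (K div 2) powr e + (real K - real (K div 2)) powr e
        \<le> real m powr e + (real K - real m) powr e"
      using that by (intro powr_add_powr_compl_antimono e) auto
    moreover have "(real K - real m) powr e \<le> real n powr e"
      using that e by (intro powr_mono2') auto
    ultimately show ?thesis
      by (simp add: of_nat_diff)
  qed
  show ?thesis
    using balanced_le[of a b] balanced_le[of b a] ab by (cases "a \<le> b") (simp_all add: add.commute)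
qed

lemma two_powr_three_minus: "(2::real) powr (3 - \<alpha>) = 4 * 2 powr (1 - \<alpha>)"
proof -
  have "(2::real) powr (3 - \<alpha>) = 2 powr (2 + (1 - \<alpha>))"
    by simp
  also have "\<dots> = 4 * 2 powr (1 - \<alpha>)"
    by (simp only: powr_add) simp
  finally show ?thesis .
qed

(* The balanced sizes are K/2 * (1 -+ delta) with delta = 0 for even K and delta = 1/K for
   odd K; the latter is where sigma_const comes from. *)
lemma C_formula_eq_balanced_split:
  fixes \<alpha> :: real and K :: nat
  assumes \<alpha>: "1 < \<alpha>" "\<alpha> \<le> 2" and K: "2 \<le> K"
  shows "4 * C_formula \<alpha> K
    = (real (K div 2) powr ((1 - \<alpha>) / (3 - \<alpha>)) + real (K - K div 2) powr ((1 - \<alpha>) / (3 - \<alpha>)))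
        powr (3 - \<alpha>)"
proof -
  define e where "e = (1 - \<alpha>) / (3 - \<alpha>)"
  define \<delta> where "\<delta> = (if even K then 0 else 1 / real K)"
  define S where "S = ((1 - \<delta>) powr e + (1 + \<delta>) powr e) / 2"
  define h where "h = real K / 2"
  have h: "0 < h" using K by (simp add: h_def)
  have \<delta>: "0 \<le> \<delta>" "\<delta> < 1"
    using K by (auto simp: \<delta>_def)
  then have S: "0 < S"
    unfolding S_def by (intro divide_pos_pos add_pos_pos) auto
  have halves: "real (K div 2) = h * (1 - \<delta>)" "real (K - K div 2) = h * (1 + \<delta>)"
  proof -
    have "real (K div 2) = (real K - (if even K then 0 else 1)) / 2"
      by (cases "even K") (auto elim!: evenE oddE simp: field_simps)
    then show "real (K div 2) = h * (1 - \<delta>)"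
      using K by (auto simp: h_def \<delta>_def field_simps)
    then show "real (K - K div 2) = h * (1 + \<delta>)"
      by (simp add: of_nat_diff h_def algebra_simps)
  qed
  have "(h * (1 - \<delta>)) powr e = h powr e * (1 - \<delta>) powr e" "(h * (1 + \<delta>)) powr e = h powr e * (1 + \<delta>) powr e"
    using h \<delta> by (simp_all add: powr_mult)
  moreover have "(1 - \<delta>) powr e + (1 + \<delta>) powr e = 2 * S"
    by (simp add: S_def)
  ultimately have "real (K div 2) powr e + real (K - K div 2) powr e = h powr e * (2 * S)"
    unfolding halves by (metis distrib_left)
  then have "(real (K div 2) powr e + real (K - K div 2) powr e) powr (3 - \<alpha>)
      = (h powr e * (2 * S)) powr (3 - \<alpha>)"
    by (rule arg_cong)
  also have "\<dots> = (h powr e) powr (3 - \<alpha>) * 2 powr (3 - \<alpha>) * S powr (3 - \<alpha>)"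
    using h S by (simp add: powr_mult)
  also have "(h powr e) powr (3 - \<alpha>) = h powr (1 - \<alpha>)"
    using \<alpha> by (simp add: powr_powr e_def)
  also have "h powr (1 - \<alpha>) * 2 powr (3 - \<alpha>) = 4 * real K powr (1 - \<alpha>)"
    using h two_powr_three_minus[of \<alpha>] by (simp add: h_def powr_mult[symmetric])
  also have "4 * real K powr (1 - \<alpha>) * S powr (3 - \<alpha>) = 4 * C_formula \<alpha> K"
    using \<alpha> by (simp add: C_formula_def sigma_const_def S_def \<delta>_def e_def)
  finally show ?thesis
    by (simp add: e_def)
qed

lemma inverse_sum_powr_ge_powr_sum:
  fixes z :: "'a \<Rightarrow> real"
  assumes C: "finite C" "C \<noteq> {}" and z: "\<And>k. k \<in> C \<Longrightarrow> 0 < z k" and r: "1 \<le> r"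
  shows "(\<Sum>k\<in>C. z k) powr (- r) \<le> 1 / (\<Sum>k\<in>C. z k powr r)"
proof -
  have "0 < z k powr r" if "k \<in> C" for k
    using z[OF that] by simp
  then have "0 < (\<Sum>k\<in>C. z k powr r)"
    using C by (intro sum_pos) auto
  moreover have "(\<Sum>k\<in>C. z k powr r) \<le> (\<Sum>k\<in>C. z k) powr r"
    using C z r by (intro sum_powr_le_powr_sum) auto
  ultimately show ?thesis
    by (simp add: powr_minus divide_inverse le_imp_inverse_le)
qed

lemma inverse_sum_powr_ge_card_powr_sum:
  fixes z :: "'a \<Rightarrow> real"
  assumes C: "finite C" "C \<noteq> {}" and z: "\<And>k. k \<in> C \<Longrightarrow> 0 < z k" and r: "0 \<le> r" "r \<le> 1"
  shows "real (card C) powr (r - 1) * (\<Sum>k\<in>C. z k) powr (- r) \<le> 1 / (\<Sum>k\<in>C. z k powr r)"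
proof -
  have "0 < z k powr r" if "k \<in> C" for k
    using z[OF that] by simp
  then have "0 < (\<Sum>k\<in>C. z k powr r)"
    using C by (intro sum_pos) auto
  moreover have "(\<Sum>k\<in>C. z k powr r) \<le> real (card C) powr (1 - r) * (\<Sum>k\<in>C. z k) powr r"
    using C z r by (intro sum_powr_le_card_powr_sum) auto
  ultimately have "inverse (real (card C) powr (1 - r) * (\<Sum>k\<in>C. z k) powr r) \<le> 1 / (\<Sum>k\<in>C. z k powr r)"
    by (metis le_imp_inverse_le inverse_eq_divide)
  moreover have "real (card C) powr (r - 1) = inverse (real (card C) powr (1 - r))"
    using powr_minus[of "real (card C)" "1 - r"] by simp
  ultimately show ?thesis
    by (simp add: powr_minus mult_ac)
qed

lemma C_formula_le_block_sums_le_one: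
  fixes \<alpha> :: real and z :: "nat \<Rightarrow> real"
  assumes \<alpha>: "\<alpha> \<le> 1" and AB: "finite A" "finite B" "A \<noteq> {}" "B \<noteq> {}"
    and z: "\<And>k. k \<in> A \<Longrightarrow> 0 < z k" "\<And>k. k \<in> B \<Longrightarrow> 0 < z k"
    and mass: "(\<Sum>k\<in>A. z k) + (\<Sum>k\<in>B. z k) \<le> 1"
  shows "4 * C_formula \<alpha> K \<le> 1 / (\<Sum>k\<in>A. z k powr (2 - \<alpha>)) + 1 / (\<Sum>k\<in>B. z k powr (2 - \<alpha>))"
proof -
  define r where "r = 2 - \<alpha>"
  have r: "1 \<le> r" using \<alpha> by (simp add: r_def)
  have "4 * C_formula \<alpha> K = (1 powr (1 / (1 + r)) + 1 powr (1 / (1 + r))) powr (1 + r)"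
    using \<alpha> by (simp add: C_formula_def r_def two_powr_three_minus[symmetric])
  also have "\<dots> \<le> 1 * (\<Sum>k\<in>A. z k) powr (- r) + 1 * (\<Sum>k\<in>B. z k) powr (- r)"
    using AB z r mass by (intro weighted_inverse_powr_sum_ge sum_pos) auto
  also have "\<dots> \<le> 1 / (\<Sum>k\<in>A. z k powr r) + 1 / (\<Sum>k\<in>B. z k powr r)"
    using AB z r by (simp add: add_mono inverse_sum_powr_ge_powr_sum)
  finally show ?thesis
    by (simp add: r_def)
qed

lemma C_formula_le_block_sums_mid:
  fixes \<alpha> :: real and z :: "nat \<Rightarrow> real"
  assumes \<alpha>: "1 < \<alpha>" "\<alpha> \<le> 2" and K: "2 \<le> K"
    and AB: "finite A" "finite B" "A \<noteq> {}" "B \<noteq> {}" "card A + card B \<le> K"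
    and z: "\<And>k. k \<in> A \<Longrightarrow> 0 < z k" "\<And>k. k \<in> B \<Longrightarrow> 0 < z k"
    and mass: "(\<Sum>k\<in>A. z k) + (\<Sum>k\<in>B. z k) \<le> 1"
  shows "4 * C_formula \<alpha> K \<le> 1 / (\<Sum>k\<in>A. z k powr (2 - \<alpha>)) + 1 / (\<Sum>k\<in>B. z k powr (2 - \<alpha>))"
proof -
  define r where "r = 2 - \<alpha>"
  define e where "e = (1 - \<alpha>) / (3 - \<alpha>)"
  have r: "0 \<le> r" "r \<le> 1" using \<alpha> by (simp_all add: r_def)
  have e: "e \<le> 0" using \<alpha> by (simp add: e_def divide_nonpos_pos)
  have weight: "(real (card C) powr (r - 1)) powr (1 / (1 + r)) = real (card C) powr e" for C :: "nat set"
  proof -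
    have "(r - 1) * (1 / (1 + r)) = e"
      by (simp add: e_def r_def)
    then show ?thesis
      by (simp only: powr_powr)
  qed
  have "4 * C_formula \<alpha> K = (real (K div 2) powr e + real (K - K div 2) powr e) powr (1 + r)"
    using C_formula_eq_balanced_split[OF \<alpha> K] by (simp add: e_def r_def)
  also have "\<dots> \<le> (real (card A) powr e + real (card B) powr e) powr (1 + r)"
    using AB e r by (intro powr_mono2 powr_add_powr_ge_balanced_split) (auto simp: Suc_le_eq card_gt_0_iff)
  also have "\<dots> \<le> real (card A) powr (r - 1) * (\<Sum>k\<in>A. z k) powr (- r)
                + real (card B) powr (r - 1) * (\<Sum>k\<in>B. z k) powr (- r)"
    using weighted_inverse_powr_sum_ge[of "real (card A) powr (r - 1)" "real (card B) powr (r - 1)"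
        "\<Sum>k\<in>A. z k" "\<Sum>k\<in>B. z k" r] AB z mass r
    unfolding weight by (simp add: card_gt_0_iff sum_pos)
  also have "\<dots> \<le> 1 / (\<Sum>k\<in>A. z k powr r) + 1 / (\<Sum>k\<in>B. z k powr r)"
    using AB z r by (intro add_mono inverse_sum_powr_ge_card_powr_sum) auto
  finally show ?thesis
    by (simp add: r_def)
qed

lemma C_formula_le_two_point:
  fixes \<alpha> x y :: real
  assumes \<alpha>: "2 < \<alpha>" and xy: "0 < x" "0 < y" "x + y = 1"
  shows "4 * C_formula \<alpha> 2 \<le> x powr (\<alpha> - 2) + y powr (\<alpha> - 2)"
proof (cases "3 \<le> \<alpha>")
  case True
  define g where "g = \<alpha> - 2"
  have tangent: "(1/2) powr g + g * (1/2) powr (g - 1) * (t - 1/2) \<le> t powr g" if "0 < t" for t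
    using powr_above_tangent[of t "1/2" g] that True by (simp add: g_def)
  have "4 * C_formula \<alpha> 2 = 2 * (1/2) powr g"
    using True \<alpha> by (simp add: C_formula_def g_def two_powr_three_minus[symmetric] powr_divide
                             powr_diff max_def)
  also have "\<dots> \<le> x powr g + y powr g"
  proof -
    have "g * (1/2) powr (g - 1) * (x - 1/2) + g * (1/2) powr (g - 1) * (y - 1/2)
        = g * (1/2) powr (g - 1) * (x + y - 1)"
      by (simp add: algebra_simps)
    then show ?thesis
      using tangent[OF xy(1)] tangent[OF xy(2)] xy(3) by simp
  qed
  finally show ?thesis
    by (simp add: g_def)
next
  case False
  have "t \<le> t powr (\<alpha> - 2)" if "0 < t" "t \<le> 1" for t
    using powr_mono'[of "\<alpha> - 2" 1 t] that \<alpha> False by simp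
  then have "x + y \<le> x powr (\<alpha> - 2) + y powr (\<alpha> - 2)"
    using xy by (intro add_mono) auto
  moreover have "4 * C_formula \<alpha> 2 = 1"
    using \<alpha> False by (simp add: C_formula_def max_def powr_minus)
  ultimately show ?thesis
    using xy by simp
qed

lemma disjoint_nonempty_subsets_lessThan_2:
  assumes "A \<subseteq> {..<2}" "B \<subseteq> {..<2}" "A \<inter> B = {}" "A \<noteq> {}" "B \<noteq> {}"
  shows "A = {0} \<and> B = {1} \<or> A = {1} \<and> B = {0 :: nat}"
proof -
  have sub: "A \<subseteq> {0, 1}" "B \<subseteq> {0, 1}"
    using assms(1,2) by auto
  show ?thesis
  proof (cases "0 \<in> A")
    case True
    then have "B = {1}"
      using sub(2) assms(3,5) by blast
    moreover have "A = {0}"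
      using True sub(1) assms(3) \<open>B = {1}\<close> by blast
    ultimately show ?thesis
      by blast
  next
    case False
    then have "A = {1}"
      using sub(1) assms(4) by blast
    moreover have "B = {0}"
      using sub(2) assms(3,5) \<open>A = {1}\<close> by blast
    ultimately show ?thesis
      by blast
  qed
qed

lemma C_formula_le_inverse_block_sums:
  fixes \<alpha> :: real and z :: "nat \<Rightarrow> real"
  assumes K: "2 \<le> K" and z: "\<And>k. k < K \<Longrightarrow> 0 < z k" "(\<Sum>k<K. z k) = 1"
    and AB: "A \<subseteq> {..<K}" "B \<subseteq> {..<K}" "A \<inter> B = {}" "A \<noteq> {}" "B \<noteq> {}"
  shows "4 * C_formula \<alpha> K \<le> 1 / (\<Sum>k\<in>A. z k powr (2 - \<alpha>)) + 1 / (\<Sum>k\<in>B. z k powr (2 - \<alpha>))"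
proof -
  have fin: "finite A" "finite B"
    using AB finite_subset by blast+
  have pos: "\<And>k. k \<in> A \<Longrightarrow> 0 < z k" "\<And>k. k \<in> B \<Longrightarrow> 0 < z k"
    using AB z(1) by blast+
  have "(\<Sum>k\<in>A. z k) + (\<Sum>k\<in>B. z k) = (\<Sum>k\<in>A \<union> B. z k)"
    using fin AB by (simp add: sum.union_disjoint)
  also have "\<dots> \<le> (\<Sum>k<K. z k)"
    using AB z(1) by (intro sum_mono2) (auto intro: less_imp_le)
  finally have mass: "(\<Sum>k\<in>A. z k) + (\<Sum>k\<in>B. z k) \<le> 1"
    using z(2) by simp
  have "card A + card B = card (A \<union> B)"
    using fin AB by (simp add: card_Un_disjoint)
  also have "\<dots> \<le> K"
    using AB card_mono[of "{..<K}" "A \<union> B"] by simp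
  finally have card: "card A + card B \<le> K" .
  consider "\<alpha> \<le> 1" | "1 < \<alpha>" "\<alpha> \<le> 2" | "2 < \<alpha>" "K = 2" | "2 < \<alpha>" "K \<noteq> 2"
    by linarith
  then show ?thesis
  proof cases
    case 1
    then show ?thesis
      using C_formula_le_block_sums_le_one fin AB pos mass by blast
  next
    case 2
    then show ?thesis
      using C_formula_le_block_sums_mid K fin AB pos mass card by blast
  next
    case 3
    have "4 * C_formula \<alpha> 2 \<le> z 0 powr (\<alpha> - 2) + z 1 powr (\<alpha> - 2)"
      using z 3 by (intro C_formula_le_two_point) (auto simp: numeral_2_eq_2)
    moreover have "1 / t powr (2 - \<alpha>) = t powr (\<alpha> - 2)" for t :: real
      using powr_minus_divide[of t "2 - \<alpha>"] by simp
    ultimately show ?thesis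
      using disjoint_nonempty_subsets_lessThan_2[of A B] AB 3 by (auto simp: add.commute)
  next
    case 4
    have "0 \<le> 1 / (\<Sum>k\<in>A. z k powr (2 - \<alpha>)) + 1 / (\<Sum>k\<in>B. z k powr (2 - \<alpha>))"
      by (auto intro!: add_nonneg_nonneg sum_nonneg)
    then show ?thesis
      using 4 by (simp add: C_formula_def)
  qed
qed

lemma sum_abs_sq_le_weighted:
  fixes d w :: "'a \<Rightarrow> real"
  assumes "\<And>k. k \<in> A \<Longrightarrow> 0 < w k"
  shows "(\<Sum>k\<in>A. \<bar>d k\<bar>)\<^sup>2 \<le> (\<Sum>k\<in>A. (d k)\<^sup>2 / w k) * (\<Sum>k\<in>A. w k)"
proof -
  have "\<bar>d k\<bar> = \<bar>d k\<bar> / sqrt (w k) * sqrt (w k)" if "k \<in> A" for k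
    using assms[OF that] by simp
  then have "(\<Sum>k\<in>A. \<bar>d k\<bar>) = (\<Sum>k\<in>A. \<bar>d k\<bar> / sqrt (w k) * sqrt (w k))"
    by (rule sum.cong[OF refl])
  then have "(\<Sum>k\<in>A. \<bar>d k\<bar>)\<^sup>2 \<le> (\<Sum>k\<in>A. (\<bar>d k\<bar> / sqrt (w k))\<^sup>2) * (\<Sum>k\<in>A. (sqrt (w k))\<^sup>2)"
    by (simp only: Cauchy_Schwarz_ineq_sum)
  also have "\<dots> = (\<Sum>k\<in>A. (d k)\<^sup>2 / w k) * (\<Sum>k\<in>A. w k)"
    using assms by (simp add: power_divide less_imp_le)
  finally show ?thesis .
qed

lemma sum_abs_sq_le_powr_weighted:
  fixes z d :: "'a \<Rightarrow> real"
  assumes z: "\<And>k. k \<in> C \<Longrightarrow> 0 < z k"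
  shows "(\<Sum>k\<in>C. \<bar>d k\<bar>)\<^sup>2 \<le> (\<Sum>k\<in>C. (d k)\<^sup>2 * z k powr (\<alpha> - 2)) * (\<Sum>k\<in>C. z k powr (2 - \<alpha>))"
proof -
  have "(d k)\<^sup>2 / z k powr (2 - \<alpha>) = (d k)\<^sup>2 * z k powr (\<alpha> - 2)" for k
    using powr_minus_divide[of "z k" "2 - \<alpha>"] by (simp add: divide_inverse)
  moreover have "0 < z k powr (2 - \<alpha>)" if "k \<in> C" for k
    using z[OF that] by simp
  ultimately show ?thesis
    using sum_abs_sq_le_weighted[of C "\<lambda>k. z k powr (2 - \<alpha>)" d] by simp
qed

lemma sum_lessThan_split_sign:
  fixes d g :: "nat \<Rightarrow> real"
  assumes "\<And>k. d k = 0 \<Longrightarrow> g k = 0"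
  shows "(\<Sum>k<K. g k) = (\<Sum>k\<in>{k \<in> {..<K}. 0 < d k}. g k) + (\<Sum>k\<in>{k \<in> {..<K}. d k < 0}. g k)"
proof -
  have "g k = 0" if "k \<in> {..<K} - ({k \<in> {..<K}. 0 < d k} \<union> {k \<in> {..<K}. d k < 0})" for k
  proof -
    have "d k = 0"
      using that by auto
    then show ?thesis
      by (rule assms)
  qed
  then have "(\<Sum>k<K. g k) = (\<Sum>k\<in>{k \<in> {..<K}. 0 < d k} \<union> {k \<in> {..<K}. d k < 0}. g k)"
    by (intro sum.mono_neutral_right) auto
  also have "\<dots> = (\<Sum>k\<in>{k \<in> {..<K}. 0 < d k}. g k) + (\<Sum>k\<in>{k \<in> {..<K}. d k < 0}. g k)"
    by (rule sum.union_disjoint) auto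
  finally show ?thesis .
qed

lemma zero_sum_abs_neg_part_eq_pos_part:
  fixes d :: "nat \<Rightarrow> real"
  assumes "(\<Sum>k<K. d k) = 0"
  shows "(\<Sum>k\<in>{k \<in> {..<K}. d k < 0}. \<bar>d k\<bar>) = (\<Sum>k\<in>{k \<in> {..<K}. 0 < d k}. \<bar>d k\<bar>)"
proof -
  have "(\<Sum>k\<in>{k \<in> {..<K}. 0 < d k}. \<bar>d k\<bar>) = (\<Sum>k\<in>{k \<in> {..<K}. 0 < d k}. d k)"
    by (intro sum.cong) auto
  moreover have "(\<Sum>k\<in>{k \<in> {..<K}. d k < 0}. \<bar>d k\<bar>) = - (\<Sum>k\<in>{k \<in> {..<K}. d k < 0}. d k)"
    by (simp add: sum_negf[symmetric])
  moreover have "(\<Sum>k\<in>{k \<in> {..<K}. 0 < d k}. d k) + (\<Sum>k\<in>{k \<in> {..<K}. d k < 0}. d k) = 0"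
    using assms sum_lessThan_split_sign[of d d K] by simp
  ultimately show ?thesis
    by simp
qed

lemma C_formula_mul_l1_sq_le_hessian:
  fixes \<alpha> :: real and z d :: "nat \<Rightarrow> real"
  assumes K: "2 \<le> K" and z: "\<And>k. k < K \<Longrightarrow> 0 < z k" "(\<Sum>k<K. z k) = 1"
    and d: "(\<Sum>k<K. d k) = 0"
  shows "C_formula \<alpha> K * (\<Sum>k<K. \<bar>d k\<bar>)\<^sup>2 \<le> (\<Sum>k<K. (d k)\<^sup>2 * z k powr (\<alpha> - 2))"
proof -
  define A where "A = {k \<in> {..<K}. 0 < d k}"
  define B where "B = {k \<in> {..<K}. d k < 0}"
  define \<delta> where "\<delta> = (\<Sum>k\<in>A. \<bar>d k\<bar>)"
  define H where "H C = (\<Sum>k\<in>C. (d k)\<^sup>2 * z k powr (\<alpha> - 2))" for C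
  define Z where "Z C = (\<Sum>k\<in>C. z k powr (2 - \<alpha>))" for C
  have AB: "A \<subseteq> {..<K}" "B \<subseteq> {..<K}" "A \<inter> B = {}"
    by (auto simp: A_def B_def)
  have B_mass: "(\<Sum>k\<in>B. \<bar>d k\<bar>) = \<delta>"
    using zero_sum_abs_neg_part_eq_pos_part[OF d] by (simp add: A_def B_def \<delta>_def)
  have l1: "(\<Sum>k<K. \<bar>d k\<bar>) = 2 * \<delta>"
    using sum_lessThan_split_sign[of d "\<lambda>k. \<bar>d k\<bar>" K] B_mass by (simp add: A_def B_def \<delta>_def)
  have H: "(\<Sum>k<K. (d k)\<^sup>2 * z k powr (\<alpha> - 2)) = H A + H B" "0 \<le> H A" "0 \<le> H B"
    using sum_lessThan_split_sign[of d "\<lambda>k. (d k)\<^sup>2 * z k powr (\<alpha> - 2)" K]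
    by (auto simp: A_def B_def H_def intro: sum_nonneg)
  show ?thesis
  proof (cases "A = {} \<or> B = {}")
    case True
    then have "\<delta> = 0"
      using B_mass by (auto simp: \<delta>_def)
    then show ?thesis
      using H l1 by simp
  next
    case False
    have z_pos: "\<And>k. k \<in> A \<Longrightarrow> 0 < z k" "\<And>k. k \<in> B \<Longrightarrow> 0 < z k"
      using AB z(1) by blast+
    have z_AB: "0 < z k" if "k \<in> A \<union> B" for k
      using that z_pos by blast
    have "0 < z k powr (2 - \<alpha>)" if "k \<in> A \<union> B" for k
      using z_AB[OF that] by simp
    then have Z: "0 < Z A" "0 < Z B"
      unfolding Z_def using False finite_subset[OF AB(1)] finite_subset[OF AB(2)]
      by (auto intro!: sum_pos)
    have "C_formula \<alpha> K * (2 * \<delta>)\<^sup>2 = \<delta>\<^sup>2 * (4 * C_formula \<alpha> K)"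
      by (simp add: power2_eq_square)
    also have "\<dots> \<le> \<delta>\<^sup>2 * (1 / Z A + 1 / Z B)"
      using C_formula_le_inverse_block_sums[OF K z AB] False by (simp add: Z_def mult_left_mono)
    also have "\<dots> = \<delta>\<^sup>2 / Z A + \<delta>\<^sup>2 / Z B"
      by (simp add: distrib_left)
    also have "\<dots> \<le> H A + H B"
      using sum_abs_sq_le_powr_weighted[where C = A and z = z and d = d and \<alpha> = \<alpha>, OF z_pos(1)]
        sum_abs_sq_le_powr_weighted[where C = B and z = z and d = d and \<alpha> = \<alpha>, OF z_pos(2)]
        B_mass Z
      by (intro add_mono) (simp_all add: \<delta>_def H_def Z_def divide_le_eq)
    finally show ?thesis
      using H l1 by simp
  qed
qed

lemma C_formula_in_pinsker_consts:
  assumes "2 \<le> K"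
  shows "C_formula \<alpha> K \<in> pinsker_consts \<alpha> K"
  unfolding pinsker_consts_def
proof (intro CollectI conjI ballI)
  show "0 \<le> C_formula \<alpha> K"
    by (simp add: C_formula_def sigma_const_def)
  fix p q assume "p \<in> relint_simplex K" "q \<in> relint_simplex K"
  then have pos: "\<And>k. k < K \<Longrightarrow> 0 < p k" "\<And>k. k < K \<Longrightarrow> 0 < q k"
    and sums: "(\<Sum>k<K. p k) = 1" "(\<Sum>k<K. q k) = 1"
    by (auto simp: relint_simplex_def)
  obtain \<xi> where \<xi>: "0 < \<xi>" "\<xi> < 1"
    and taylor: "tsallis_div \<alpha> K p q = (\<Sum>k<K. (p k - q k)\<^sup>2 * (q k + \<xi> * (p k - q k)) powr (\<alpha> - 2)) / 2"
    by (rule tsallis_div_taylor[OF pos])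
  have "0 < q k + \<xi> * (p k - q k)" if "k < K" for k
    using pos[OF that] pos(2)[OF that] \<xi> by (intro segment_pos) auto
  moreover have "(\<Sum>k<K. q k + \<xi> * (p k - q k)) = 1"
    using sums by (simp add: sum.distrib sum_subtractf sum_distrib_left[symmetric])
  moreover have "(\<Sum>k<K. p k - q k) = 0"
    using sums by (simp add: sum_subtractf)
  ultimately have "C_formula \<alpha> K * (l1_dist K p q)\<^sup>2
      \<le> (\<Sum>k<K. (p k - q k)\<^sup>2 * (q k + \<xi> * (p k - q k)) powr (\<alpha> - 2))"
    unfolding l1_dist_def by (rule C_formula_mul_l1_sq_le_hessian[OF assms])
  then show "C_formula \<alpha> K / 2 * (l1_dist K p q)\<^sup>2 \<le> tsallis_div \<alpha> K p q"
    unfolding taylor by simp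
qed

lemma relint_simplexI:
  assumes K: "2 \<le> K" and p: "\<And>k. k < K \<Longrightarrow> 0 < p k" "(\<Sum>k<K. p k) = 1"
  shows "p \<in> relint_simplex K"
  unfolding relint_simplex_def
proof (intro CollectI conjI allI impI p)
  fix k assume k: "k < K"
  define j where "j = (if k = 0 then 1 else 0 :: nat)"
  have j: "j \<in> {..<K} - {k}"
    using K by (auto simp: j_def)
  have "(\<Sum>i<K. p i) = p k + (\<Sum>i\<in>{..<K} - {k}. p i)"
    using k by (simp add: sum.remove)
  moreover have "0 < (\<Sum>i\<in>{..<K} - {k}. p i)"
    using j p(1) by (intro sum_pos) auto
  ultimately show "p k < 1"
    using p(2) by linarith
qed

lemma sum_lessThan_if_less:
  fixes X Y :: "'a :: comm_ring_1"
  assumes "m \<le> K"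
  shows "(\<Sum>k<K. if k < m then X else Y) = of_nat m * X + of_nat (K - m) * Y"
proof -
  have "{..<K} = {..<m} \<union> {m..<K}" "{..<m} \<inter> {m..<K} = {}"
    using assms by auto
  then show ?thesis
    by (simp add: sum.union_disjoint)
qed

lemma powr_between_le_max:
  fixes x y t c :: real
  assumes xy: "0 < x" "0 < y" and t: "0 \<le> t" "t \<le> 1"
  shows "(y + t * (x - y)) powr c \<le> max (x powr c) (y powr c)"
proof -
  define z where "z = y + t * (x - y)"
  have eqs: "z - x = (1 - t) * (y - x)" "y - z = t * (y - x)"
    by (simp_all add: z_def algebra_simps)
  have between: "min x y \<le> z \<and> z \<le> max x y"
  proof (cases "x \<le> y")
    case True
    then have "0 \<le> (1 - t) * (y - x)" "0 \<le> t * (y - x)"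
      using t by simp_all
    then show ?thesis
      using True eqs by linarith
  next
    case False
    then have "(1 - t) * (y - x) \<le> 0" "t * (y - x) \<le> 0"
      using t by (simp_all add: mult_nonneg_nonpos)
    then show ?thesis
      using False eqs by linarith
  qed
  show ?thesis
  proof (cases "0 \<le> c")
    case True
    then have "z powr c \<le> max x y powr c"
      using between xy by (intro powr_mono2) (auto simp: max_def)
    then show ?thesis
      by (cases "x \<le> y") (simp_all add: z_def le_max_iff_disj max_def)
  next
    case False
    then have "z powr c \<le> min x y powr c"
      using between xy by (intro powr_mono2') (auto simp: min_def)
    then show ?thesis
      by (cases "x \<le> y") (simp_all add: z_def le_max_iff_disj min_def)
  qed
qed

lemma tsallis_div_le_max_curvature:
  assumes "\<And>k. k < K \<Longrightarrow> 0 < p k" "\<And>k. k < K \<Longrightarrow> 0 < q k"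
  shows "tsallis_div \<alpha> K p q \<le> (\<Sum>k<K. (p k - q k)\<^sup>2 * max (p k powr (\<alpha> - 2)) (q k powr (\<alpha> - 2))) / 2"
proof -
  obtain \<xi> where "0 < \<xi>" "\<xi> < 1"
    and taylor: "tsallis_div \<alpha> K p q = (\<Sum>k<K. (p k - q k)\<^sup>2 * (q k + \<xi> * (p k - q k)) powr (\<alpha> - 2)) / 2"
    by (rule tsallis_div_taylor[OF assms])
  then show ?thesis
    unfolding taylor using assms
    by (intro divide_right_mono sum_mono mult_left_mono powr_between_le_max) auto
qed

(* Divide the defining inequality at p = q + t d by t^2 and let t tend to 0. *)
lemma pinsker_const_le_hessian:
  fixes q d :: "nat \<Rightarrow> real"
  assumes K: "2 \<le> K" and C: "C \<in> pinsker_consts \<alpha> K" and q: "q \<in> relint_simplex K"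
    and d: "(\<Sum>k<K. d k) = 0"
  shows "C * (\<Sum>k<K. \<bar>d k\<bar>)\<^sup>2 \<le> (\<Sum>k<K. (d k)\<^sup>2 * q k powr (\<alpha> - 2))"
proof -
  have q_pos: "\<And>k. k < K \<Longrightarrow> 0 < q k" and q_sum: "(\<Sum>k<K. q k) = 1"
    using q by (auto simp: relint_simplex_def)
  define \<psi> where "\<psi> t = (\<Sum>k<K. (d k)\<^sup>2 * max ((q k + t * d k) powr (\<alpha> - 2)) (q k powr (\<alpha> - 2)))" for t
  have "\<forall>\<^sub>F t in at_right 0. \<forall>k\<in>{..<K}. 0 < q k + t * d k"
  proof (rule eventually_ball_finite[OF finite_lessThan], intro ballI)
    fix k assume "k \<in> {..<K}"
    have "((\<lambda>t. q k + t * d k) \<longlongrightarrow> q k + 0 * d k) (at_right 0)"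
      by (intro tendsto_intros)
    then show "\<forall>\<^sub>F t in at_right 0. 0 < q k + t * d k"
      using q_pos \<open>k \<in> {..<K}\<close> by (intro order_tendstoD(1)) auto
  qed
  moreover note eventually_at_right_less[of "0 :: real"]
  ultimately have "\<forall>\<^sub>F t in at_right 0. C * (\<Sum>k<K. \<bar>d k\<bar>)\<^sup>2 \<le> \<psi> t"
  proof eventually_elim
    case (elim t)
    define p where "p k = q k + t * d k" for k
    have p: "p \<in> relint_simplex K"
      using elim d q_sum by (intro relint_simplexI K) (auto simp: p_def sum.distrib sum_distrib_left[symmetric])
    have "C / 2 * (l1_dist K p q)\<^sup>2 \<le> tsallis_div \<alpha> K p q"
      using C p q by (auto simp: pinsker_consts_def)
    also have "\<dots> \<le> t\<^sup>2 * \<psi> t / 2"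
      using tsallis_div_le_max_curvature[of K p q \<alpha>] elim q_pos
      by (simp add: p_def \<psi>_def power_mult_distrib sum_distrib_left mult.assoc)
    finally have "t\<^sup>2 * (C * (\<Sum>k<K. \<bar>d k\<bar>)\<^sup>2) \<le> t\<^sup>2 * \<psi> t"
      using elim by (simp add: l1_dist_def p_def abs_mult sum_distrib_left[symmetric] power_mult_distrib
                               mult_ac)
    then show ?case
      using elim by simp
  qed
  moreover have "(\<psi> \<longlongrightarrow> (\<Sum>k<K. (d k)\<^sup>2 * max ((q k + 0 * d k) powr (\<alpha> - 2)) (q k powr (\<alpha> - 2))))
      (at_right 0)"
    unfolding \<psi>_def using q_pos by (intro tendsto_intros) (auto simp: less_imp_neq[symmetric])
  ultimately show ?thesis
    by (intro tendsto_lowerbound[where F = "at_right 0"]) auto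
qed

lemma pinsker_const_le_two_coords:
  assumes K: "2 \<le> K" and C: "C \<in> pinsker_consts \<alpha> K" and q: "q \<in> relint_simplex K"
    and ij: "i < K" "j < K" "i \<noteq> j"
  shows "4 * C \<le> q i powr (\<alpha> - 2) + q j powr (\<alpha> - 2)"
proof -
  define d :: "nat \<Rightarrow> real" where "d k = (if k = i then 1 else 0) - (if k = j then 1 else 0)" for k
  have d0: "(\<Sum>k<K. d k) = 0"
    using ij by (simp add: d_def sum_subtractf)
  have "\<bar>d k\<bar> = (if k = i then 1 else 0) + (if k = j then 1 else 0)" for k
    using ij(3) by (simp add: d_def)
  moreover have "(d k)\<^sup>2 * q k powr (\<alpha> - 2)
      = (if k = i then q i powr (\<alpha> - 2) else 0) + (if k = j then q j powr (\<alpha> - 2) else 0)" for k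
    using ij(3) by (simp add: d_def)
  ultimately have "C * 2\<^sup>2 \<le> q i powr (\<alpha> - 2) + q j powr (\<alpha> - 2)"
    using pinsker_const_le_hessian[OF K C q d0] ij by (simp add: sum.distrib)
  then show ?thesis
    by simp
qed

lemma eventually_at_right_0_below:
  assumes "0 < b"
  shows "\<forall>\<^sub>F t in at_right 0. 0 < t \<and> t < (b::real)"
  unfolding eventually_at_right_field using assms by blast

lemma pinsker_const_le_two_powr:
  assumes K: "2 \<le> K" and C: "C \<in> pinsker_consts \<alpha> K"
  shows "C \<le> 2 powr (1 - \<alpha>)"
proof -
  define h where "h t = (1 - real (K - 2) * t) / 2" for t :: real
  have "4 * C \<le> 2 * h t powr (\<alpha> - 2)" if t: "0 < t \<and> t < 1 / real K" for t
  proof -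
    define q where "q k = (if k < 2 then h t else t)" for k :: nat
    have "real (K - 2) * t < real K * t"
      using K t by (intro mult_strict_right_mono) auto
    also have "\<dots> < 1"
      using K t by (simp add: field_simps)
    finally have "0 < h t"
      by (simp add: h_def)
    then have "q \<in> relint_simplex K"
      using K t by (intro relint_simplexI) (auto simp: q_def sum_lessThan_if_less h_def diff_divide_distrib)
    from pinsker_const_le_two_coords[OF K C this, of 0 1] show ?thesis
      using K by (simp add: q_def)
  qed
  then have "\<forall>\<^sub>F t in at_right 0. 4 * C \<le> 2 * h t powr (\<alpha> - 2)"
    using eventually_at_right_0_below[of "1 / real K"] K by (auto elim: eventually_mono)
  moreover have "((\<lambda>t. 2 * h t powr (\<alpha> - 2)) \<longlongrightarrow> 2 * h 0 powr (\<alpha> - 2)) (at_right 0)"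
    unfolding h_def by (intro tendsto_intros) auto
  ultimately have "4 * C \<le> 2 * h 0 powr (\<alpha> - 2)"
    using tendsto_lowerbound by (metis trivial_limit_at_right_real)
  then have "4 * C \<le> 2 * (1 / 2) powr (\<alpha> - 2)"
    by (simp add: h_def)
  also have "2 * (1 / 2) powr (\<alpha> - 2) = 4 * 2 powr (1 - \<alpha>)"
    by (simp add: powr_divide powr_diff two_powr_three_minus[symmetric] powr_minus_divide)
  finally show ?thesis
    by simp
qed

lemma pinsker_const_le_of_gt_two:
  assumes K: "2 \<le> K" and C: "C \<in> pinsker_consts \<alpha> K" and \<alpha>: "2 < \<alpha>"
  shows "4 * C \<le> (if K = 2 then 1 else 0)"
proof -
  define y where "y t = (if K = 2 then 1 - t else t)" for t :: real
  have "4 * C \<le> t powr (\<alpha> - 2) + y t powr (\<alpha> - 2)" if t: "0 < t \<and> t < 1 / real K" for t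
  proof -
    define q where "q k = (if k < K - 1 then t else 1 - real (K - 1) * t)" for k :: nat
    have "real (K - 1) * t < real K * t"
      using K t by (intro mult_strict_right_mono) auto
    also have "\<dots> < 1"
      using K t by (simp add: field_simps)
    finally have "q \<in> relint_simplex K"
      using K t by (intro relint_simplexI) (auto simp: q_def sum_lessThan_if_less)
    moreover have "K = 2 \<or> 1 < K - 1"
      using K by linarith
    ultimately show ?thesis
      using pinsker_const_le_two_coords[OF K C, of q 0 1] K by (auto simp: q_def y_def)
  qed
  then have "\<forall>\<^sub>F t in at_right 0. 4 * C \<le> t powr (\<alpha> - 2) + y t powr (\<alpha> - 2)"
    using eventually_at_right_0_below[of "1 / real K"] K by (auto elim: eventually_mono)
  moreover have "((\<lambda>t. t powr (\<alpha> - 2) + y t powr (\<alpha> - 2)) \<longlongrightarrow> (if K = 2 then 1 else 0)) (at_right 0)"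
  proof -
    have zero: "((\<lambda>t. t powr (\<alpha> - 2)) \<longlongrightarrow> 0) (at_right (0::real))"
      using \<alpha> by (intro tendsto_zero_powrI tendsto_ident_at tendsto_const)
                   (auto simp: eventually_at_right_field intro: exI[of _ 1])
    show ?thesis
    proof (cases "K = 2")
      case True
      have "((\<lambda>t. (1 - t) powr (\<alpha> - 2)) \<longlongrightarrow> (1 - 0) powr (\<alpha> - 2)) (at_right (0::real))"
        by (intro tendsto_intros) auto
      then show ?thesis
        using tendsto_add[OF zero] True by (simp add: y_def)
    next
      case False
      then show ?thesis
        using tendsto_add[OF zero zero] by (simp add: y_def)
    qed
  qed
  ultimately show ?thesis
    using tendsto_lowerbound by (metis trivial_limit_at_right_real)
qed

lemma pinsker_const_le_two_blocks:
  fixes U V :: real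
  assumes K: "2 \<le> K" and C: "C \<in> pinsker_consts \<alpha> K" and m: "1 \<le> m" "m < K"
    and UV: "0 < U" "0 < V" "U + V = 1"
  shows "4 * C \<le> (U / real m) powr (\<alpha> - 2) / real m
                  + (V / real (K - m)) powr (\<alpha> - 2) / real (K - m)"
proof -
  define M1 M2 where "M1 = real m" and "M2 = real (K - m)"
  have M: "0 < M1" "0 < M2"
    using m by (auto simp: M1_def M2_def)
  define q where "q k = (if k < m then U / M1 else V / M2)" for k
  define d where "d k = (if k < m then 1 / M1 else - 1 / M2)" for k
  have "q \<in> relint_simplex K"
    using K m M UV by (intro relint_simplexI) (auto simp: q_def sum_lessThan_if_less M1_def M2_def)
  moreover have "(\<Sum>k<K. d k) = 0"
    using m M by (simp add: d_def sum_lessThan_if_less M1_def M2_def)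
  ultimately have "C * (\<Sum>k<K. \<bar>d k\<bar>)\<^sup>2 \<le> (\<Sum>k<K. (d k)\<^sup>2 * q k powr (\<alpha> - 2))"
    by (rule pinsker_const_le_hessian[OF K C])
  moreover have "(\<Sum>k<K. \<bar>d k\<bar>) = 2"
  proof -
    have "\<bar>d k\<bar> = (if k < m then 1 / M1 else 1 / M2)" for k
      using M by (simp add: d_def)
    then show ?thesis
      using m M by (simp add: sum_lessThan_if_less M1_def M2_def)
  qed
  moreover have "(\<Sum>k<K. (d k)\<^sup>2 * q k powr (\<alpha> - 2))
      = (U / M1) powr (\<alpha> - 2) / M1 + (V / M2) powr (\<alpha> - 2) / M2"
  proof -
    have "(d k)\<^sup>2 * q k powr (\<alpha> - 2)
        = (if k < m then (U / M1) powr (\<alpha> - 2) / M1\<^sup>2 else (V / M2) powr (\<alpha> - 2) / M2\<^sup>2)" for k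
      by (simp add: d_def q_def power_divide)
    then show ?thesis
      using m M by (simp add: sum_lessThan_if_less M1_def M2_def power2_eq_square)
  qed
  ultimately show ?thesis
    by (simp add: M1_def M2_def)
qed

(* With the optimal shares of weighted_inverse_powr_sum_at_optimum as block masses, the
   two-block direction attains the lower bound. *)
lemma pinsker_const_le_C_formula_mid:
  assumes \<alpha>: "1 < \<alpha>" "\<alpha> \<le> 2" and K: "2 \<le> K" and C: "C \<in> pinsker_consts \<alpha> K"
  shows "C \<le> C_formula \<alpha> K"
proof -
  define r where "r = 2 - \<alpha>"
  define e where "e = (1 - \<alpha>) / (3 - \<alpha>)"
  define m where "m = K - K div 2"
  define M1 M2 where "M1 = real m" and "M2 = real (K - m)"
  have r: "0 \<le> r" using \<alpha> by (simp add: r_def)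
  have m: "1 \<le> m" "m < K" "K - m = K div 2"
    using K by (auto simp: m_def)
  have M: "0 < M1" "0 < M2"
    using m by (auto simp: M1_def M2_def)
  have weight: "(M powr (r - 1)) powr (1 / (1 + r)) = M powr e" for M :: real
  proof -
    have "(r - 1) * (1 / (1 + r)) = e"
      by (simp add: e_def r_def)
    then show ?thesis
      by (simp only: powr_powr)
  qed
  define W where "W = M1 powr e + M2 powr e"
  define U V where "U = M1 powr e / W" and "V = M2 powr e / W"
  have W: "0 < W"
    using M by (simp add: W_def add_pos_pos)
  then have UV: "0 < U" "0 < V" "U + V = 1"
    using M by (simp_all add: U_def V_def W_def add_divide_distrib[symmetric])
  have block: "(X / M) powr (\<alpha> - 2) / M = M powr (r - 1) * X powr (- r)" if "0 < M" "0 < X" for X M :: real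
    using that by (simp add: r_def powr_divide powr_diff powr_minus field_simps power2_eq_square)
  have "4 * C \<le> (U / M1) powr (\<alpha> - 2) / M1 + (V / M2) powr (\<alpha> - 2) / M2"
    using pinsker_const_le_two_blocks[OF K C m(1,2) UV] by (simp add: M1_def M2_def)
  also have "\<dots> = M1 powr (r - 1) * U powr (- r) + M2 powr (r - 1) * V powr (- r)"
    using block M UV by simp
  also have "\<dots> = W powr (1 + r)"
    using weighted_inverse_powr_sum_at_optimum[of "M1 powr (r - 1)" "M2 powr (r - 1)" r] M r
    unfolding weight by (simp add: W_def U_def V_def)
  also have "\<dots> = 4 * C_formula \<alpha> K"
    using C_formula_eq_balanced_split[OF \<alpha> K] m
    by (simp add: W_def M1_def M2_def m_def e_def r_def add.commute)
  finally show ?thesis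
    by simp
qed

lemma pinsker_const_le_C_formula:
  assumes K: "2 \<le> K" and C: "C \<in> pinsker_consts \<alpha> K"
  shows "C \<le> C_formula \<alpha> K"
proof -
  consider "\<alpha> \<le> 1" | "1 < \<alpha>" "\<alpha> \<le> 2" | "2 < \<alpha>" "K \<noteq> 2" | "3 \<le> \<alpha>" "K = 2" | "2 < \<alpha>" "\<alpha> < 3" "K = 2"
    by linarith
  then show ?thesis
  proof cases
    case 2
    then show ?thesis
      using pinsker_const_le_C_formula_mid K C by blast
  next
    case 3
    then show ?thesis
      using pinsker_const_le_of_gt_two[OF K C] by (simp add: C_formula_def)
  next
    case 5
    then show ?thesis
      using pinsker_const_le_of_gt_two[OF K C] by (simp add: C_formula_def max_def powr_minus)
  qed (use pinsker_const_le_two_powr[OF K C] in \<open>auto simp: C_formula_def max_def\<close>)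
qed

theorem theorem1:
  fixes \<alpha> :: real and K :: nat
  assumes "K \<ge> 2"
  shows "is_arg_max (\<lambda>C. C) (\<lambda>C. C \<in> pinsker_consts \<alpha> K) (C_formula \<alpha> K)"
  unfolding is_arg_max_def
  using C_formula_in_pinsker_consts[OF assms] pinsker_const_le_C_formula[OF assms]
  by (auto simp: not_less)

end
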